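(* Let $d\in\{2,3\}$, $\kappa>0$, $\sigma^{-1}=2\kappa$, $\rho(s)=(2/s)^{d/2}\Gamma(d/2+1)J_{d/2}(s)$ and $K(x,x')=\rho(\sigma^{-1}|x-x'|)$. Then for all $x,x'\in\mathbb{R}^d$ with $\sigma^{-1}|x-x'|/\sqrt{d+2}\ge 1/\sqrt5$, one has $|K(x,x')|\le 1-\bar\epsilon_0$ with $\bar\epsilon_0=0.07$.
   Context: $J_{d/2}$ is the Bessel function of the first kind of order $d/2$ and $\Gamma$ the Gamma function. $K$ coincides with $\int_{B(0,2\kappa)}e^{i\langle\omega,x-x'\rangle}\,d\Lambda(\omega)$ for $\Lambda$ uniform on $B(0,2\kappa)$. *)

theory Defs
  imports "HOL-Analysis.Analysis"
begin

definition bessel_J :: "real \<Rightarrow> real \<Rightarrow> real" where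
  "bessel_J nu s = (\<Sum>m. (-1) ^ m / (fact m * Gamma (real m + nu + 1)) * (s / 2) powr (2 * real m + nu))"

definition rho :: "nat \<Rightarrow> real \<Rightarrow> real" where
  "rho d s = (2 / s) powr (real d / 2) * Gamma (real d / 2 + 1) * bessel_J (real d / 2) s"

definition kernK :: "real \<Rightarrow> real ^ 'n \<Rightarrow> real ^ 'n \<Rightarrow> real" where
  "kernK kappa x x' = rho CARD('n) ((2 * kappa) * norm (x - x'))"

end

theory Submission
  imports Defs
begin

text \<open>
  With \<open>t = s\<^sup>2 / 4\<close> and \<open>\<nu> = d / 2\<close>, \<open>rho d s\<close> is the entire power series
  \<open>g(t) = \<Sum>\<^sub>n (-t)\<^sup>n / (n! (\<nu>+1)\<^sub>n)\<close>, which solves \<open>t g'' + (\<nu>+1) g' + g = 0\<close>. Along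
  solutions the energy \<open>H = g\<^sup>2 + t g'\<^sup>2\<close> has \<open>H' = -(2\<nu>+1) g'\<^sup>2 \<le> 0\<close>, so \<open>g(t)\<^sup>2 \<le> H(t\<^sub>0)\<close>
  for \<open>t \<ge> t\<^sub>0 \<ge> 0\<close>. The hypothesis says \<open>t \<ge> (d+2)/20\<close>, and at that point \<open>H \<le> 0.93\<^sup>2\<close>,
  as a partial sum of the series plus a geometric bound on its tail shows.
\<close>

lemma one_le_pochhammer:
  fixes a :: "'a::linordered_semidom"
  assumes "1 \<le> a"
  shows "1 \<le> pochhammer a n"
proof (induction n)
  case (Suc n)
  have "1 \<le> a + of_nat n" using assms by (simp add: add_increasing2)
  then have "1 * 1 \<le> pochhammer a n * (a + of_nat n)"
    using Suc by (intro mult_mono) (auto intro: order_trans[OF zero_le_one])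
  then show ?case by (simp add: pochhammer_Suc)
qed simp

lemma summable_powser_if_abs_le_inverse_fact:
  fixes c :: "nat \<Rightarrow> real"
  assumes "\<And>n. \<bar>c n\<bar> \<le> 1 / fact n"
  shows "summable (\<lambda>n. c n * t ^ n)"
proof (rule summable_comparison_test)
  show "\<exists>N. \<forall>n\<ge>N. norm (c n * t ^ n) \<le> \<bar>t\<bar> ^ n / fact n"
  proof (intro exI allI impI)
    fix n :: nat
    have "\<bar>c n\<bar> * \<bar>t\<bar> ^ n \<le> (1 / fact n) * \<bar>t\<bar> ^ n"
      by (intro mult_right_mono assms) auto
    then show "norm (c n * t ^ n) \<le> \<bar>t\<bar> ^ n / fact n" by (simp add: abs_mult power_abs)
  qed
  show "summable (\<lambda>n. \<bar>t\<bar> ^ n / fact n)"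
    using summable_exp[of "\<bar>t\<bar>"] by (simp add: divide_inverse mult.commute)
qed

lemma abs_diffs_le_inverse_fact:
  fixes c :: "nat \<Rightarrow> real"
  assumes "\<And>n. \<bar>c n\<bar> \<le> 1 / fact n"
  shows "\<bar>diffs c n\<bar> \<le> 1 / fact n"
proof -
  have "\<bar>diffs c n\<bar> = real (Suc n) * \<bar>c (Suc n)\<bar>" by (simp add: diffs_def abs_mult)
  also have "\<dots> \<le> real (Suc n) * (1 / fact (Suc n))" by (intro mult_left_mono assms) auto
  also have "\<dots> = 1 / fact n" by (simp add: fact_Suc del: of_nat_Suc)
  finally show ?thesis .
qed

lemma of_nat_mult_powser_sums:
  fixes c :: "nat \<Rightarrow> 'a::real_normed_field"
  assumes "(\<lambda>n. diffs c n * t ^ n) sums s"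
  shows "(\<lambda>n. of_nat n * c n * t ^ n) sums (t * s)"
proof -
  have "(\<lambda>n. t * (diffs c n * t ^ n)) sums (t * s)" using sums_mult[OF assms] .
  then have "(\<lambda>n. of_nat (Suc n) * c (Suc n) * t ^ Suc n) sums (t * s)"
    by (simp add: diffs_def algebra_simps)
  then show ?thesis by (subst (asm) sums_Suc_iff) simp
qed

lemma abs_powser_minus_partial_sum_le:
  fixes c :: "nat \<Rightarrow> real"
  assumes c: "\<And>n. \<bar>c n\<bar> \<le> 1" and t: "0 \<le> t" "t < 1"
  shows "\<bar>(\<Sum>n. c n * t ^ n) - (\<Sum>n<N. c n * t ^ n)\<bar> \<le> t ^ N / (1 - t)"
proof -
  have bound: "\<bar>c n * t ^ n\<bar> \<le> t ^ n" for n
    using c[of n] t by (simp add: abs_mult mult_left_le_one_le)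
  have geometric: "summable (\<lambda>n. t ^ n)"
    using t by (intro summable_geometric) auto
  have abs_summable: "summable (\<lambda>n. \<bar>c n * t ^ n\<bar>)"
    using bound by (intro summable_comparison_test[OF _ geometric]) auto
  then have tail: "summable (\<lambda>n. \<bar>c (n + N) * t ^ (n + N)\<bar>)"
    by (rule iffD2[OF summable_iff_shift])
  have "(\<Sum>n. c n * t ^ n) - (\<Sum>n<N. c n * t ^ n) = (\<Sum>n. c (n + N) * t ^ (n + N))"
    using suminf_split_initial_segment[OF summable_rabs_cancel[OF abs_summable], of N] by simp
  also have "\<bar>\<dots>\<bar> \<le> (\<Sum>n. \<bar>c (n + N) * t ^ (n + N)\<bar>)"
    by (rule summable_rabs[OF tail])
  also have "\<dots> \<le> (\<Sum>n. t ^ N * t ^ n)"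
  proof (rule suminf_le[OF _ tail])
    show "\<bar>c (n + N) * t ^ (n + N)\<bar> \<le> t ^ N * t ^ n" for n
      using bound[of "n + N"] by (simp add: power_add mult.commute)
    show "summable (\<lambda>n. t ^ N * t ^ n)"
      using geometric by (rule summable_mult)
  qed
  also have "\<dots> = t ^ N * (1 / (1 - t))"
    using suminf_mult[OF geometric, of "t ^ N"] suminf_geometric[of t] t by simp
  finally show ?thesis by simp
qed

lemma bessel_ode_energy_antimono:
  fixes g g' g'' :: "real \<Rightarrow> real"
  assumes g: "\<And>t. (g has_real_derivative g' t) (at t)"
    and g': "\<And>t. (g' has_real_derivative g'' t) (at t)"
    and ode: "\<And>t. t * g'' t + (nu + 1) * g' t + g t = 0"
    and nu: "nu \<ge> - 1 / 2" and "t0 \<le> t"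
  shows "(g t)\<^sup>2 + t * (g' t)\<^sup>2 \<le> (g t0)\<^sup>2 + t0 * (g' t0)\<^sup>2"
proof (rule DERIV_nonpos_imp_nonincreasing[OF \<open>t0 \<le> t\<close>])
  fix y
  have "((\<lambda>t. (g t)\<^sup>2 + t * (g' t)\<^sup>2) has_real_derivative
      2 * g y * g' y + (g' y)\<^sup>2 + 2 * g' y * (y * g'' y)) (at y)"
    unfolding power2_eq_square
    by (rule derivative_eq_intros g g' refl)+ (simp add: algebra_simps)
  moreover have "2 * g y * g' y + (g' y)\<^sup>2 + 2 * g' y * (y * g'' y)
      = - (2 * nu + 1) * (g' y)\<^sup>2"
    using ode[of y] by (simp add: algebra_simps power2_eq_square) algebra
  moreover have "- (2 * nu + 1) * (g' y)\<^sup>2 \<le> 0"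
    using nu by (intro mult_nonpos_nonneg) auto
  ultimately show "\<exists>D. ((\<lambda>t. (g t)\<^sup>2 + t * (g' t)\<^sup>2) has_real_derivative D) (at y) \<and> D \<le> 0"
    by auto
qed

definition bessel_coeff :: "real \<Rightarrow> nat \<Rightarrow> real" where
  "bessel_coeff nu n = (-1) ^ n / (fact n * pochhammer (nu + 1) n)"

definition bessel_series :: "real \<Rightarrow> real \<Rightarrow> real" where
  "bessel_series nu t = (\<Sum>n. bessel_coeff nu n * t ^ n)"

definition bessel_series' :: "real \<Rightarrow> real \<Rightarrow> real" where
  "bessel_series' nu t = (\<Sum>n. diffs (bessel_coeff nu) n * t ^ n)"

definition bessel_series'' :: "real \<Rightarrow> real \<Rightarrow> real" where
  "bessel_series'' nu t = (\<Sum>n. diffs (diffs (bessel_coeff nu)) n * t ^ n)"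

text \<open>No hypothesis is needed: where a factor of the denominator vanishes, both sides are \<open>0\<close>
  by the convention \<open>x / 0 = 0\<close>.\<close>

lemma bessel_coeff_Suc:
  "bessel_coeff nu (Suc n) = - bessel_coeff nu n / ((real n + 1) * (nu + 1 + real n))"
  by (simp add: bessel_coeff_def pochhammer_Suc field_simps)

lemma diffs_bessel_coeff:
  "diffs (bessel_coeff nu) n = - bessel_coeff nu n / (nu + 1 + real n)"
proof -
  have "diffs (bessel_coeff nu) n = (real n + 1) * bessel_coeff nu (Suc n)"
    by (simp add: diffs_def add.commute)
  also have "\<dots> = - bessel_coeff nu n / (nu + 1 + real n)"
    unfolding bessel_coeff_Suc by (simp add: mult_divide_mult_cancel_left del: of_nat_Suc)
  finally show ?thesis .
qed

lemma abs_bessel_coeff_le: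
  assumes "nu \<ge> 0"
  shows "\<bar>bessel_coeff nu n\<bar> \<le> 1 / fact n"
proof -
  have "1 \<le> pochhammer (nu + 1) n" using assms by (intro one_le_pochhammer) simp
  then show ?thesis
    by (simp add: bessel_coeff_def abs_mult divide_left_mono)
qed

lemma summable_bessel_powser:
  assumes "nu \<ge> 0"
  shows "summable (\<lambda>n. bessel_coeff nu n * t ^ n)"
  using abs_bessel_coeff_le[OF assms] by (rule summable_powser_if_abs_le_inverse_fact)

lemma normalized_bessel_J_eq_bessel_series:
  assumes s: "s > 0" and nu: "nu \<ge> 0"
  shows "(2 / s) powr nu * Gamma (nu + 1) * bessel_J nu s = bessel_series nu (s\<^sup>2 / 4)"
proof -
  have Gamma_pos: "Gamma (nu + 1) > 0" using nu by (intro Gamma_real_pos) auto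
  have "nu + 1 \<notin> \<int>\<^sub>\<le>\<^sub>0" using nu nonpos_Ints_nonpos by force
  then have Gamma_shift: "Gamma (real m + nu + 1) = pochhammer (nu + 1) m * Gamma (nu + 1)" for m
    using pochhammer_Gamma[of "nu + 1" m] Gamma_pos by (simp add: field_simps)
  have powr_shift: "(s / 2) powr (2 * real m + nu) = (s\<^sup>2 / 4) ^ m * (s / 2) powr nu" for m
  proof -
    have "(s / 2) powr (2 * real m) = (s / 2) ^ (2 * m)"
      using powr_realpow[of "s / 2" "2 * m"] s by simp
    also have "\<dots> = (s\<^sup>2 / 4) ^ m"
      by (simp add: power_mult power_divide)
    finally show ?thesis using s by (simp add: powr_add)
  qed
  define K where "K = (s / 2) powr nu / Gamma (nu + 1)"
  have series_term: "(-1) ^ m / (fact m * Gamma (real m + nu + 1)) * (s / 2) powr (2 * real m + nu)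
      = K * (bessel_coeff nu m * (s\<^sup>2 / 4) ^ m)" for m
    unfolding Gamma_shift powr_shift K_def bessel_coeff_def by (simp add: field_simps)
  have "bessel_J nu s = K * bessel_series nu (s\<^sup>2 / 4)"
    unfolding bessel_J_def series_term bessel_series_def
    using summable_bessel_powser[OF nu] by (rule suminf_mult)
  moreover have "(2 / s) powr nu * Gamma (nu + 1) * K = 1"
    unfolding K_def using Gamma_pos s by (simp add: powr_mult[symmetric] field_simps)
  ultimately show ?thesis by (metis mult.assoc mult_1)
qed

lemma bessel_series_has_real_derivative:
  assumes "nu \<ge> 0"
  shows "(bessel_series nu has_real_derivative bessel_series' nu t) (at t)"
  unfolding bessel_series_def[abs_def] bessel_series'_def
  using summable_bessel_powser[OF assms] by (rule termdiffs_strong_converges_everywhere)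

lemma bessel_series'_has_real_derivative:
  assumes "nu \<ge> 0"
  shows "(bessel_series' nu has_real_derivative bessel_series'' nu t) (at t)"
  unfolding bessel_series'_def[abs_def] bessel_series''_def
  using termdiff_converges_all[OF summable_bessel_powser[OF assms]]
  by (rule termdiffs_strong_converges_everywhere)

lemma bessel_series_ode:
  assumes "nu \<ge> 0"
  shows "t * bessel_series'' nu t + (nu + 1) * bessel_series' nu t + bessel_series nu t = 0"
proof -
  let ?c = "bessel_coeff nu"
  have coeff: "of_nat n * diffs ?c n + (nu + 1) * diffs ?c n + ?c n = 0" for n
  proof -
    have "nu + 1 + real n \<noteq> 0" using assms by simp
    then have "(nu + 1 + real n) * diffs ?c n = - ?c n" by (simp add: diffs_bessel_coeff)
    then show ?thesis by (simp add: algebra_simps)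
  qed
  have "(\<lambda>n. of_nat n * diffs ?c n * t ^ n) sums (t * bessel_series'' nu t)"
    unfolding bessel_series''_def
    using termdiff_converges_all[OF termdiff_converges_all[OF summable_bessel_powser[OF assms]]]
    by (intro of_nat_mult_powser_sums) blast
  moreover have "(\<lambda>n. (nu + 1) * (diffs ?c n * t ^ n)) sums ((nu + 1) * bessel_series' nu t)"
    unfolding bessel_series'_def using termdiff_converges_all[OF summable_bessel_powser[OF assms]]
    by (intro sums_mult) blast
  moreover have "(\<lambda>n. ?c n * t ^ n) sums bessel_series nu t"
    unfolding bessel_series_def using summable_bessel_powser[OF assms] by blast
  ultimately have "(\<lambda>n. (of_nat n * diffs ?c n + (nu + 1) * diffs ?c n + ?c n) * t ^ n)
      sums (t * bessel_series'' nu t + (nu + 1) * bessel_series' nu t + bessel_series nu t)"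
    by (simp add: distrib_right mult.assoc sums_add)
  then show ?thesis by (simp add: coeff) (metis sums_unique2 sums_zero)
qed

lemma abs_bessel_series_le:
  assumes nu: "nu \<ge> 0" and t: "0 \<le> t0" "t0 \<le> t" and "0 \<le> B"
    and energy: "(bessel_series nu t0)\<^sup>2 + t0 * (bessel_series' nu t0)\<^sup>2 \<le> B\<^sup>2"
  shows "\<bar>bessel_series nu t\<bar> \<le> B"
proof -
  have "(bessel_series nu t)\<^sup>2 \<le> (bessel_series nu t)\<^sup>2 + t * (bessel_series' nu t)\<^sup>2"
    using t by simp
  also have "\<dots> \<le> (bessel_series nu t0)\<^sup>2 + t0 * (bessel_series' nu t0)\<^sup>2"
    using bessel_ode_energy_antimono[OF bessel_series_has_real_derivative[OF nu]
        bessel_series'_has_real_derivative[OF nu] bessel_series_ode[OF nu]]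
      nu t(2) by simp
  also have "\<dots> \<le> B\<^sup>2"
    by (fact energy)
  finally show ?thesis
    using \<open>0 \<le> B\<close> by (metis abs_of_nonneg abs_le_square_iff)
qed

lemma bessel_energy_le_of_partial_sums:
  assumes nu: "nu \<ge> 0" and t: "0 \<le> t" "t < 1"
    and B: "(\<bar>\<Sum>n<N. bessel_coeff nu n * t ^ n\<bar> + t ^ N / (1 - t))\<^sup>2
      + t * (\<bar>\<Sum>n<N. diffs (bessel_coeff nu) n * t ^ n\<bar> + t ^ N / (1 - t))\<^sup>2 \<le> B"
  shows "(bessel_series nu t)\<^sup>2 + t * (bessel_series' nu t)\<^sup>2 \<le> B"
proof -
  let ?tail = "t ^ N / (1 - t)"
  have inverse_fact_le_1: "1 / fact n \<le> (1::real)" for n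
    by simp
  have "\<bar>bessel_coeff nu n\<bar> \<le> 1" for n
    using abs_bessel_coeff_le[OF nu] inverse_fact_le_1 by (rule order_trans)
  from abs_powser_minus_partial_sum_le[of "bessel_coeff nu", OF this t, where N = N]
  have abs_g: "\<bar>bessel_series nu t\<bar> \<le> \<bar>\<Sum>n<N. bessel_coeff nu n * t ^ n\<bar> + ?tail"
    unfolding bessel_series_def by linarith
  have g: "(bessel_series nu t)\<^sup>2 \<le> (\<bar>\<Sum>n<N. bessel_coeff nu n * t ^ n\<bar> + ?tail)\<^sup>2"
    using power_mono[OF abs_g abs_ge_zero, of 2] by simp
  have "\<bar>diffs (bessel_coeff nu) n\<bar> \<le> 1" for n
    using abs_diffs_le_inverse_fact[OF abs_bessel_coeff_le[OF nu]] inverse_fact_le_1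
    by (rule order_trans)
  from abs_powser_minus_partial_sum_le[of "diffs (bessel_coeff nu)", OF this t, where N = N]
  have abs_g': "\<bar>bessel_series' nu t\<bar> \<le> \<bar>\<Sum>n<N. diffs (bessel_coeff nu) n * t ^ n\<bar> + ?tail"
    unfolding bessel_series'_def by linarith
  have g': "(bessel_series' nu t)\<^sup>2 \<le> (\<bar>\<Sum>n<N. diffs (bessel_coeff nu) n * t ^ n\<bar> + ?tail)\<^sup>2"
    using power_mono[OF abs_g' abs_ge_zero, of 2] by simp
  from g g' t(1) have "(bessel_series nu t)\<^sup>2 + t * (bessel_series' nu t)\<^sup>2
      \<le> (\<bar>\<Sum>n<N. bessel_coeff nu n * t ^ n\<bar> + ?tail)\<^sup>2
        + t * (\<bar>\<Sum>n<N. diffs (bessel_coeff nu) n * t ^ n\<bar> + ?tail)\<^sup>2"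
    by (intro add_mono mult_left_mono)
  also note B
  finally show ?thesis .
qed

text \<open>The energy at \<open>t\<^sub>0 = (d + 2) / 20\<close> for \<open>d = 2, 3\<close>; five terms of each series suffice.\<close>

lemma bessel_energy_bounds:
  "(bessel_series 1 (1/5))\<^sup>2 + 1/5 * (bessel_series' 1 (1/5))\<^sup>2 \<le> (1 - 0.07)\<^sup>2"
  "(bessel_series (3/2) (1/4))\<^sup>2 + 1/4 * (bessel_series' (3/2) (1/4))\<^sup>2 \<le> (1 - 0.07)\<^sup>2"
  by (rule bessel_energy_le_of_partial_sums[where N = 5];
      simp add: bessel_coeff_def diffs_def eval_nat_numeral pochhammer_Suc)+

theorem lemma4:
  fixes kappa :: real and x x' :: "real ^ 'n"
  assumes "CARD('n) \<in> {2, 3}"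
    and "kappa > 0"
    and "(2 * kappa) * norm (x - x') / sqrt (real CARD('n) + 2) \<ge> 1 / sqrt 5"
  shows "\<bar>kernK kappa x x'\<bar> \<le> 1 - 0.07"
proof -
  define s where "s = 2 * kappa * norm (x - x')"
  define d where "d = CARD('n)"
  have s_ge: "sqrt ((real d + 2) / 5) \<le> s"
    using assms(3) by (simp add: s_def d_def real_sqrt_divide field_simps)
  moreover have "0 < sqrt ((real d + 2) / 5)" by simp
  ultimately have s_pos: "s > 0" by linarith
  have t_ge: "(real d + 2) / 20 \<le> s\<^sup>2 / 4"
    using sqrt_le_D[OF s_ge] by simp
  have kernel: "kernK kappa x x' = bessel_series (real d / 2) (s\<^sup>2 / 4)"
    unfolding kernK_def rho_def s_def[symmetric] d_def[symmetric]
    using normalized_bessel_J_eq_bessel_series[OF s_pos] by simp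
  show ?thesis
  proof (cases "d = 2")
    case True
    then show ?thesis
      using abs_bessel_series_le[OF _ _ _ _ bessel_energy_bounds(1)] kernel t_ge by simp
  next
    case False
    with assms(1) have "d = 3" unfolding d_def by auto
    then show ?thesis
      using abs_bessel_series_le[OF _ _ _ _ bessel_energy_bounds(2)] kernel t_ge by simp
  qed
qed

end
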